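(* Let $G$ be a finite simple graph of order $n$, and for $k\in\{0,1,\dots,n\}$ let $c_k$ denote the number of connected sets of $G$ of order $k$. Then \[ 2c_k\leq (n-k+1)c_{k-1} \] for all $k\in\{2,\dots,n\}$. More generally, \[ (k-t+1)c_k\leq \binom{n-t}{k-t}c_t \] for all $k\in\{2,\dots,n\}$ and $t\in\{1,\dots,k-1\}$.
   Context: A subset $C$ of the vertex set of a graph $G$ is a connected set if it is nonempty and the induced subgraph $G[C]$ is connected. The order of a connected set is its cardinality; in particular $c_0=0$. *)

theory Defs
  imports Main
begin

definition simple_graph :: "'a set \<Rightarrow> ('a \<Rightarrow> 'a \<Rightarrow> bool) \<Rightarrow> bool" where
  "simple_graph V E \<longleftrightarrow> finite V \<and> (\<forall>x y. E x y \<longrightarrow> x \<in> V \<and> y \<in> V)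
     \<and> (\<forall>x y. E x y \<longrightarrow> E y x) \<and> (\<forall>x. \<not> E x x)"

definition induced_connected :: "('a \<Rightarrow> 'a \<Rightarrow> bool) \<Rightarrow> 'a set \<Rightarrow> bool" where
  "induced_connected E C \<longleftrightarrow>
     (\<forall>x\<in>C. \<forall>y\<in>C. (x, y) \<in> {(a, b). a \<in> C \<and> b \<in> C \<and> E a b}\<^sup>*)"

definition connected_set :: "'a set \<Rightarrow> ('a \<Rightarrow> 'a \<Rightarrow> bool) \<Rightarrow> 'a set \<Rightarrow> bool" where
  "connected_set V E C \<longleftrightarrow> C \<subseteq> V \<and> C \<noteq> {} \<and> induced_connected E C"

text \<open>Number of connected sets of order k (so c 0 = 0).\<close>
definition num_connected_sets :: "'a set \<Rightarrow> ('a \<Rightarrow> 'a \<Rightarrow> bool) \<Rightarrow> nat \<Rightarrow> nat" where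
  "num_connected_sets V E k = card {C. connected_set V E C \<and> card C = k}"

end

theory Submission
  imports Defs
begin

text \<open>
  Double counting of the pairs (D, C) with D a connected set of order t contained in a connected
  set C of order k. A connected set of order k contains at least k - t + 1 connected subsets of
  order t: grow a connected subset of order k - 1, which by induction contains k - t of them,
  and grow one more from the missing vertex. Conversely a set of order t lies in at most
  (n - t choose k - t) sets of order k. The case t = k - 1 is the first inequality.
\<close>

definition connected_subsets :: "('a \<Rightarrow> 'a \<Rightarrow> bool) \<Rightarrow> 'a set \<Rightarrow> nat \<Rightarrow> 'a set set" where
  "connected_subsets E C t = {D. D \<subseteq> C \<and> induced_connected E D \<and> card D = t}"

lemma finite_connected_subsets: "finite C \<Longrightarrow> finite (connected_subsets E C t)"
  by (rule finite_subset[of _ "Pow C"]) (auto simp: connected_subsets_def)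

lemma induced_connected_singleton: "induced_connected E {u}"
  by (simp add: induced_connected_def)

lemma induced_connected_edge_leaving:
  assumes "induced_connected E C" "D \<subseteq> C" "x \<in> D" "y \<in> C" "y \<notin> D"
  obtains d w where "d \<in> D" "w \<in> C - D" "E d w"
proof -
  let ?R = "{(a, b). a \<in> C \<and> b \<in> C \<and> E a b}"
  have "(x, y) \<in> ?R\<^sup>*" using assms unfolding induced_connected_def by blast
  then have "y \<notin> D \<longrightarrow> (\<exists>d\<in>D. \<exists>w\<in>C - D. E d w)"
  proof (induction rule: rtrancl_induct)
    case base then show ?case using \<open>x \<in> D\<close> by blast
  next
    case (step y z)
    then show ?case by (cases "y \<in> D") auto
  qed
  then show ?thesis using assms that by blast
qed

lemma induced_connected_insert:
  assumes sym: "\<forall>x y. E x y \<longrightarrow> E y x"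
    and conn: "induced_connected E D" and "d \<in> D" and "E d w"
  shows "induced_connected E (insert w D)"
proof -
  let ?S = "{(a, b). a \<in> insert w D \<and> b \<in> insert w D \<and> E a b}"
  have "{(a, b). a \<in> D \<and> b \<in> D \<and> E a b}\<^sup>* \<subseteq> ?S\<^sup>*" by (rule rtrancl_mono) auto
  then have in_D: "(x, y) \<in> ?S\<^sup>*" if "x \<in> D" "y \<in> D" for x y
    using conn that unfolding induced_connected_def by blast
  have "(w, d) \<in> ?S\<^sup>*" "(d, w) \<in> ?S\<^sup>*" using assms by blast+
  then have to_w: "(x, w) \<in> ?S\<^sup>*" and from_w: "(w, x) \<in> ?S\<^sup>*" if "x \<in> insert w D" for x
    using that in_D[OF _ \<open>d \<in> D\<close>, of x] in_D[OF \<open>d \<in> D\<close>, of x]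
    by (auto intro: rtrancl_trans)
  show ?thesis
    unfolding induced_connected_def
  proof (intro ballI)
    fix x y assume x: "x \<in> insert w D" and y: "y \<in> insert w D"
    show "(x, y) \<in> ?S\<^sup>*"
    proof (cases "x = w \<or> y = w")
      case True then show ?thesis using x y to_w from_w by auto
    next
      case False then show ?thesis using x y in_D by simp
    qed
  qed
qed

lemma induced_connected_subset_containing:
  assumes sym: "\<forall>x y. E x y \<longrightarrow> E y x"
    and conn: "induced_connected E C" and "finite C" and "u \<in> C"
    and "1 \<le> s" "s \<le> card C"
  shows "\<exists>D\<subseteq>C. u \<in> D \<and> induced_connected E D \<and> card D = s"
  using \<open>1 \<le> s\<close> \<open>s \<le> card C\<close>
proof (induction s rule: dec_induct)
  case base
  show ?case
    using \<open>u \<in> C\<close> induced_connected_singleton by (intro exI[of _ "{u}"]) simp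
next
  case (step s)
  then obtain D where D: "D \<subseteq> C" "u \<in> D" "induced_connected E D" "card D = s"
    by auto
  then have "D \<noteq> C" using step.prems by auto
  then obtain y where "y \<in> C" "y \<notin> D" using D(1) by blast
  then obtain d w where dw: "d \<in> D" "w \<in> C - D" "E d w"
    using induced_connected_edge_leaving[OF conn D(1,2)] by blast
  have "finite D" using D(1) \<open>finite C\<close> finite_subset by blast
  then have "card (insert w D) = Suc s" using D(4) dw(2) by simp
  moreover have "induced_connected E (insert w D)"
    using induced_connected_insert[OF sym D(3) dw(1,3)] .
  ultimately show ?case
    using D(1,2) dw(2) by (intro exI[of _ "insert w D"]) simp
qed

lemma card_connected_subsets_ge:
  assumes sym: "\<forall>x y. E x y \<longrightarrow> E y x"
  shows "finite C \<Longrightarrow> induced_connected E C \<Longrightarrow> card C = k \<Longrightarrow> 1 \<le> t \<Longrightarrow> t \<le> k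
     \<Longrightarrow> k - t + 1 \<le> card (connected_subsets E C t)"
proof (induction k arbitrary: C)
  case 0 then show ?case by simp
next
  case (Suc k)
  note fin = finite_connected_subsets[OF Suc.prems(1)]
  show ?case
  proof (cases "t = Suc k")
    case True
    then have "C \<in> connected_subsets E C t" using Suc.prems by (simp add: connected_subsets_def)
    then have "0 < card (connected_subsets E C t)" using fin card_gt_0_iff by blast
    then show ?thesis using True by simp
  next
    case False
    then have "t \<le> k" using Suc.prems by simp
    obtain u where "u \<in> C" using Suc.prems by fastforce
    then obtain D where D: "D \<subseteq> C" "induced_connected E D" "card D = k"
      using induced_connected_subset_containing[OF sym Suc.prems(2,1) \<open>u \<in> C\<close>, of k]
        Suc.prems \<open>t \<le> k\<close> by auto
    have "finite D" using D Suc.prems finite_subset by blast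
    then have "card (C - D) = 1" using D Suc.prems by (simp add: card_Diff_subset)
    then obtain v where v: "C - D = {v}" by (rule card_1_singletonE)
    then obtain S where S: "S \<subseteq> C" "v \<in> S" "induced_connected E S" "card S = t"
      using induced_connected_subset_containing[OF sym Suc.prems(2,1), of v t] Suc.prems \<open>t \<le> k\<close>
      by auto
    have "insert S (connected_subsets E D t) \<subseteq> connected_subsets E C t"
      using S D by (auto simp: connected_subsets_def)
    moreover have "S \<notin> connected_subsets E D t" using S v by (auto simp: connected_subsets_def)
    ultimately have "card (connected_subsets E D t) + 1 \<le> card (connected_subsets E C t)"
      using card_mono[OF fin] finite_connected_subsets[OF \<open>finite D\<close>]
      by (metis Suc_eq_plus1 card_insert_disjoint)
    moreover have "k - t + 1 \<le> card (connected_subsets E D t)"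
      using Suc.IH[OF \<open>finite D\<close> D(2,3)] Suc.prems \<open>t \<le> k\<close> by simp
    ultimately show ?thesis using \<open>t \<le> k\<close> by linarith
  qed
qed

lemma card_supersets_le:
  assumes "finite V" "D \<subseteq> V"
  shows "card {C. C \<subseteq> V \<and> D \<subseteq> C \<and> card C = k} \<le> (card V - card D) choose (k - card D)"
proof -
  have fin_D: "finite D" using assms finite_subset by blast
  have "card {C. C \<subseteq> V \<and> D \<subseteq> C \<and> card C = k} \<le> card {X. X \<subseteq> V - D \<and> card X = k - card D}"
  proof (rule card_inj_on_le[where f = "\<lambda>C. C - D"])
    show "inj_on (\<lambda>C. C - D) {C. C \<subseteq> V \<and> D \<subseteq> C \<and> card C = k}"
      by (rule inj_onI) blast
    show "(\<lambda>C. C - D) ` {C. C \<subseteq> V \<and> D \<subseteq> C \<and> card C = k}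
        \<subseteq> {X. X \<subseteq> V - D \<and> card X = k - card D}"
      using fin_D by (auto simp: card_Diff_subset)
    show "finite {X. X \<subseteq> V - D \<and> card X = k - card D}"
      using assms by simp
  qed
  also have "\<dots> = (card V - card D) choose (k - card D)"
    using assms fin_D by (simp add: n_subsets card_Diff_subset)
  finally show ?thesis .
qed

lemma double_counting_le:
  fixes R :: "'a \<Rightarrow> 'b \<Rightarrow> bool"
  assumes "finite A" "finite B"
    and "\<And>a. a \<in> A \<Longrightarrow> p \<le> card {b\<in>B. R a b}"
    and "\<And>b. b \<in> B \<Longrightarrow> card {a\<in>A. R a b} \<le> q"
  shows "card A * p \<le> card B * q"
proof -
  have "card A * p \<le> (\<Sum>a\<in>A. card {b\<in>B. R a b})"
    using sum_bounded_below[of A p] assms(3) by simp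
  also have "\<dots> = (\<Sum>a\<in>A. \<Sum>b\<in>B. if R a b then 1 else 0)"
    using assms(2) by (simp add: sum.inter_filter[symmetric])
  also have "\<dots> = (\<Sum>b\<in>B. \<Sum>a\<in>A. if R a b then 1 else 0)"
    by (rule sum.swap)
  also have "\<dots> = (\<Sum>b\<in>B. card {a\<in>A. R a b})"
    using assms(1) by (simp add: sum.inter_filter[symmetric])
  also have "\<dots> \<le> card B * q"
    using sum_bounded_above[of B _ q] assms(4) by simp
  finally show ?thesis .
qed

lemma num_connected_sets_ratio:
  assumes g: "simple_graph V E" and "1 \<le> t" "t \<le> k"
  shows "(k - t + 1) * num_connected_sets V E k
    \<le> (card V - t choose (k - t)) * num_connected_sets V E t"
proof -
  have sym: "\<forall>x y. E x y \<longrightarrow> E y x" and "finite V"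
    using g unfolding simple_graph_def by auto
  define A where "A = {C. connected_set V E C \<and> card C = k}"
  define B where "B = {C. connected_set V E C \<and> card C = t}"
  have fin: "finite A" "finite B" unfolding A_def B_def connected_set_def
    using \<open>finite V\<close> by (auto intro: finite_subset[of _ "Pow V"])
  have "k - t + 1 \<le> card {D\<in>B. D \<subseteq> C}" if "C \<in> A" for C
  proof -
    have C: "C \<subseteq> V" "induced_connected E C" "card C = k"
      using that by (auto simp: A_def connected_set_def)
    then have "{D\<in>B. D \<subseteq> C} = connected_subsets E C t"
      using \<open>1 \<le> t\<close> by (auto simp: B_def connected_subsets_def connected_set_def)
    then show ?thesis
      using card_connected_subsets_ge[OF sym _ C(2,3)] C(1) \<open>finite V\<close> assms(2,3)
      by (metis finite_subset)
  qed
  moreover have "card {C\<in>A. D \<subseteq> C} \<le> card V - t choose (k - t)" if "D \<in> B" for D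
  proof -
    have D: "D \<subseteq> V" "card D = t" using that by (auto simp: B_def connected_set_def)
    have "card {C\<in>A. D \<subseteq> C} \<le> card {C. C \<subseteq> V \<and> D \<subseteq> C \<and> card C = k}"
      using \<open>finite V\<close> by (intro card_mono) (auto simp: A_def connected_set_def)
    then show ?thesis using card_supersets_le[OF \<open>finite V\<close> D(1), of k] D(2) by simp
  qed
  ultimately have "card A * (k - t + 1) \<le> card B * (card V - t choose (k - t))"
    by (rule double_counting_le[OF fin])
  then show ?thesis unfolding num_connected_sets_def A_def B_def by (simp add: mult.commute)
qed

theorem lemma2p2:
  fixes V :: "'a set" and E :: "'a \<Rightarrow> 'a \<Rightarrow> bool" and n :: nat
  assumes "simple_graph V E" and "card V = n"
  shows "(\<forall>k\<in>{2..n}. 2 * num_connected_sets V E k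
            \<le> (n - k + 1) * num_connected_sets V E (k - 1))
       \<and> (\<forall>k\<in>{2..n}. \<forall>t\<in>{1..k-1}.
            (k - t + 1) * num_connected_sets V E k
            \<le> (n - t choose (k - t)) * num_connected_sets V E t)"
proof (intro conjI ballI)
  fix k assume "k \<in> {2..n}"
  then have "1 \<le> k - 1" "k - 1 \<le> k" "k - (k - 1) + 1 = 2" "k - (k - 1) = 1"
    "n - (k - 1) = n - k + 1" by auto
  with num_connected_sets_ratio[OF assms(1)]
  show "2 * num_connected_sets V E k \<le> (n - k + 1) * num_connected_sets V E (k - 1)"
    by (metis assms(2) choose_one)
next
  fix k t assume "k \<in> {2..n}" "t \<in> {1..k-1}"
  then have "1 \<le> t" "t \<le> k" by auto
  then show "(k - t + 1) * num_connected_sets V E k \<le> (n - t choose (k - t)) * num_connected_sets V E t"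
    using num_connected_sets_ratio[OF assms(1)] assms(2) by blast
qed

end
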